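(* Let $n\ge 2$ and $m=n-1$. Let $\overline{Q}_1\subseteq\mathbb{R}^{m^2}\times\mathbb{R}^{nm}$ be the set of all $(w,y)$, with $w=(w_{ir})_{i,r\in\{1,\dots,m\}}$ and $y=(y_{ij})$ indexed by ordered pairs $(i,j)$ of distinct elements of $C=\{0,1,\dots,m\}$, satisfying (1) $\sum_{r=1}^m w_{ir}=1$ for $i=1,\dots,m$; (2) $\sum_{i=1}^m w_{ir}=1$ for $r=1,\dots,m$; (3) $w_{ir}\ge 0$ for all $i,r\in\{1,\dots,m\}$; (4) $y_{0,i}-w_{i,1}=0$ for $i=1,\dots,m$; (5) $y_{i,0}-w_{i,m}=0$ for $i=1,\dots,m$; (6) $w_{ir}+w_{j,r+1}-y_{ij}\le 1$ for all $i,j\in\{1,\dots,m\}$ with $i\ne j$ and all $r\in\{1,\dots,m-1\}$; (7) $\sum_{i=1}^m\sum_{j=1,j\ne i}^m y_{ij}=m-1$; (8) $y_{ij}\ge 0$ for all distinct $i,j\in\{0,\dots,m\}$. Then $\overline{Q}_1$ is an extended formulation of $\mathcal{A}_n$, i.e. $\pi_w(\overline{Q}_1)=\{w: \exists y,\ (w,y)\in\overline{Q}_1\}=\mathcal{A}_n$.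
   Context: $\mathcal{A}_n$ denotes the linear assignment (Birkhoff) polytope in $\mathbb{R}^{m^2}$: the set of $w=(w_{ir})_{i,r=1}^m$ satisfying constraints (1)–(3). $\pi_w$ denotes projection onto the $w$-coordinates. *)

theory Defs
  imports Complex_Main
begin

(* Points are represented as functions on indices; only the coordinates in the
   stated index ranges matter (other values are unconstrained on both sides).
   w i r for i,r in {1..m}; y i j for distinct i,j in {0..m}; m = n - 1. *)

definition assignment_polytope :: "nat \<Rightarrow> (nat \<Rightarrow> nat \<Rightarrow> real) set" where
  "assignment_polytope n = (let m = n - 1 in
     {w. (\<forall>i\<in>{1..m}. (\<Sum>r=1..m. w i r) = 1)
       \<and> (\<forall>r\<in>{1..m}. (\<Sum>i=1..m. w i r) = 1)
       \<and> (\<forall>i\<in>{1..m}. \<forall>r\<in>{1..m}. w i r \<ge> 0)})"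

definition Q1bar :: "nat \<Rightarrow> ((nat \<Rightarrow> nat \<Rightarrow> real) \<times> (nat \<Rightarrow> nat \<Rightarrow> real)) set" where
  "Q1bar n = (let m = n - 1 in
     {(w, y). (\<forall>i\<in>{1..m}. (\<Sum>r=1..m. w i r) = 1)
       \<and> (\<forall>r\<in>{1..m}. (\<Sum>i=1..m. w i r) = 1)
       \<and> (\<forall>i\<in>{1..m}. \<forall>r\<in>{1..m}. w i r \<ge> 0)
       \<and> (\<forall>i\<in>{1..m}. y 0 i - w i 1 = 0)
       \<and> (\<forall>i\<in>{1..m}. y i 0 - w i m = 0)
       \<and> (\<forall>i\<in>{1..m}. \<forall>j\<in>{1..m}. i \<noteq> j \<longrightarrow>
              (\<forall>r\<in>{1..m-1}. w i r + w j (r+1) - y i j \<le> 1))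
       \<and> (\<Sum>i=1..m. \<Sum>j\<in>{1..m}-{i}. y i j) = real m - 1
       \<and> (\<forall>i\<in>{0..m}. \<forall>j\<in>{0..m}. i \<noteq> j \<longrightarrow> y i j \<ge> 0)})"

end

theory Submission
  imports Defs
begin

(* The projection lies in the assignment polytope because constraints (1)-(3) are among those
   of Q1bar.  Conversely, for w in the assignment polytope put
   y i j = \<Sum>r. w i r * w j (r+1), the bilinear relaxation of "j is placed right after i".
   Constraint (6) holds because a + b - a b \<le> 1 whenever a, b \<le> 1.  By the column sums the
   sum of y over all pairs (i,j), diagonal included, is m - 1; the diagonal terms are
   nonnegative, so the off-diagonal total falls short of m - 1 by a nonnegative slack, which
   is added to y 1 2. *)

lemma add_minus_mult_le_one:
  fixes a b :: "'a::linordered_idom"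
  assumes "a \<le> 1" "b \<le> 1"
  shows "a + b - a * b \<le> 1"
proof -
  have "0 \<le> (1 - a) * (1 - b)"
    using assms by (intro mult_nonneg_nonneg) auto
  then show ?thesis by (simp add: algebra_simps)
qed

lemma sum_offdiag_indicator:
  fixes c :: "'b::comm_monoid_add"
  assumes "finite A" "a \<in> A" "b \<in> A" "a \<noteq> b"
  shows "(\<Sum>i\<in>A. \<Sum>j\<in>A - {i}. if i = a \<and> j = b then c else 0) = c"
proof -
  have "(\<Sum>j\<in>A - {i}. if i = a \<and> j = b then c else 0) = (if i = a then c else 0)"
    if "i \<in> A" for i
    using assms by (cases "i = a") (simp_all add: sum.delta)
  then show ?thesis
    using assms by (simp add: sum.delta cong: sum.cong)
qed

definition successor_weight :: "nat \<Rightarrow> (nat \<Rightarrow> nat \<Rightarrow> real) \<Rightarrow> nat \<Rightarrow> nat \<Rightarrow> real" where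
  "successor_weight m w i j = (\<Sum>r=1..m-1. w i r * w j (r + 1))"

lemma successor_weight_total:
  assumes "\<And>r. r \<in> {1..m} \<Longrightarrow> (\<Sum>i=1..m. w i r) = 1"
  shows "(\<Sum>i=1..m. \<Sum>j=1..m. successor_weight m w i j) = real (m - 1)"
proof -
  have "(\<Sum>i=1..m. \<Sum>j=1..m. successor_weight m w i j)
      = (\<Sum>r=1..m-1. (\<Sum>i=1..m. w i r) * (\<Sum>j=1..m. w j (r + 1)))"
    unfolding successor_weight_def sum_product
    by (subst sum.swap, rule sum.cong, simp, subst sum.swap, simp)
  also have "\<dots> = (\<Sum>r=1..m-1. 1)"
    using assms by (intro sum.cong) auto
  finally show ?thesis by simp
qed

lemma successor_weight_offdiag_le:
  assumes "\<And>r. r \<in> {1..m} \<Longrightarrow> (\<Sum>i=1..m. w i r) = 1"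
    and "\<And>i r. i \<in> {1..m} \<Longrightarrow> r \<in> {1..m} \<Longrightarrow> w i r \<ge> 0"
  shows "(\<Sum>i=1..m. \<Sum>j\<in>{1..m} - {i}. successor_weight m w i j) \<le> real (m - 1)"
proof -
  have "(\<Sum>i=1..m. \<Sum>j\<in>{1..m} - {i}. successor_weight m w i j)
      \<le> (\<Sum>i=1..m. \<Sum>j=1..m. successor_weight m w i j)"
    using assms(2) unfolding successor_weight_def
    by (intro sum_mono sum_mono2 sum_nonneg mult_nonneg_nonneg) auto
  then show ?thesis
    using successor_weight_total[OF assms(1)] by simp
qed

definition successor_slack :: "nat \<Rightarrow> (nat \<Rightarrow> nat \<Rightarrow> real) \<Rightarrow> real" where
  "successor_slack m w = real (m - 1) - (\<Sum>i=1..m. \<Sum>j\<in>{1..m} - {i}. successor_weight m w i j)"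

definition successor_lift :: "nat \<Rightarrow> (nat \<Rightarrow> nat \<Rightarrow> real) \<Rightarrow> nat \<Rightarrow> nat \<Rightarrow> real" where
  "successor_lift m w i j =
     (if i = 0 then w j 1
      else if j = 0 then w i m
      else successor_weight m w i j + (if i = 1 \<and> j = 2 then successor_slack m w else 0))"

lemma successor_lift_offdiag_sum:
  assumes "m \<ge> 1"
  shows "(\<Sum>i=1..m. \<Sum>j\<in>{1..m} - {i}. successor_lift m w i j) = real m - 1"
proof -
  let ?slack = "\<lambda>i j. if i = 1 \<and> j = 2 then successor_slack m w else 0"
  have "(\<Sum>i=1..m. \<Sum>j\<in>{1..m} - {i}. successor_lift m w i j)
      = (\<Sum>i=1..m. \<Sum>j\<in>{1..m} - {i}. successor_weight m w i j)
        + (\<Sum>i=1..m. \<Sum>j\<in>{1..m} - {i}. ?slack i j)"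
    unfolding successor_lift_def sum.distrib[symmetric] by (intro sum.cong) auto
  also have "(\<Sum>i=1..m. \<Sum>j\<in>{1..m} - {i}. ?slack i j) = successor_slack m w"
  proof (cases "m = 1")
    case True
    \<comment> \<open>no off-diagonal pair exists, and both sides vanish\<close>
    then show ?thesis by (simp add: successor_slack_def)
  next
    case False
    with assms show ?thesis by (intro sum_offdiag_indicator) auto
  qed
  finally show ?thesis
    using assms by (simp add: successor_slack_def)
qed

lemma successor_lift_in_Q1bar:
  assumes "n \<ge> 2" "w \<in> assignment_polytope n"
  shows "(w, successor_lift (n - 1) w) \<in> Q1bar n"
proof -
  define m where "m = n - 1"
  have m: "m \<ge> 1" using assms(1) by (simp add: m_def)
  have row: "\<And>i. i \<in> {1..m} \<Longrightarrow> (\<Sum>r=1..m. w i r) = 1"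
    and col: "\<And>r. r \<in> {1..m} \<Longrightarrow> (\<Sum>i=1..m. w i r) = 1"
    and nonneg: "\<And>i r. i \<in> {1..m} \<Longrightarrow> r \<in> {1..m} \<Longrightarrow> w i r \<ge> 0"
    using assms(2) by (auto simp: assignment_polytope_def Let_def m_def)
  have le_one: "w i r \<le> 1" if "i \<in> {1..m}" "r \<in> {1..m}" for i r
    using sum_nonneg_leq_bound[OF _ _ row] nonneg that by auto
  have slack_nonneg: "successor_slack m w \<ge> 0"
    using successor_weight_offdiag_le[OF col nonneg] by (simp add: successor_slack_def)
  have weight_le_lift: "successor_weight m w i j \<le> successor_lift m w i j"
    if "i \<in> {1..m}" "j \<in> {1..m}" for i j
    using that slack_nonneg by (auto simp: successor_lift_def)
  have lift_nonneg: "successor_lift m w i j \<ge> 0"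
    if "i \<in> {0..m}" "j \<in> {0..m}" "i \<noteq> j" for i j
  proof (cases "i = 0 \<or> j = 0")
    case True
    with that m show ?thesis by (auto simp: successor_lift_def intro: nonneg)
  next
    case False
    with that have ij: "i \<in> {1..m}" "j \<in> {1..m}" by auto
    then have "successor_weight m w i j \<ge> 0"
      unfolding successor_weight_def by (auto intro!: sum_nonneg mult_nonneg_nonneg nonneg)
    with weight_le_lift[OF ij] show ?thesis by linarith
  qed
  have adjacent: "w i r + w j (r + 1) - successor_lift m w i j \<le> 1"
    if "i \<in> {1..m}" "j \<in> {1..m}" "r \<in> {1..m-1}" for i j r
  proof -
    have "w i r * w j (r + 1) \<le> successor_weight m w i j"
      unfolding successor_weight_def
      using that nonneg by (intro member_le_sum mult_nonneg_nonneg) auto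
    moreover have "w i r + w j (r + 1) - w i r * w j (r + 1) \<le> 1"
      using that by (intro add_minus_mult_le_one le_one) auto
    ultimately show ?thesis
      using weight_le_lift that by fastforce
  qed
  show ?thesis
    unfolding Q1bar_def Let_def m_def[symmetric]
    using row col nonneg adjacent lift_nonneg successor_lift_offdiag_sum[OF m]
    by (auto simp: successor_lift_def)
qed

theorem lemma1:
  fixes n :: nat
  assumes "n \<ge> 2"
  shows "{w. \<exists>y. (w, y) \<in> Q1bar n} = assignment_polytope n"
proof
  show "{w. \<exists>y. (w, y) \<in> Q1bar n} \<subseteq> assignment_polytope n"
    unfolding Q1bar_def assignment_polytope_def Let_def by auto
  show "assignment_polytope n \<subseteq> {w. \<exists>y. (w, y) \<in> Q1bar n}"
    using successor_lift_in_Q1bar[OF assms] by blast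
qed

end
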